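(* Let $\mathcal{L}$ be the generator of a trace preserving quantum dynamical semigroup on $\mathfrak{T}(\mathcal{H})$ which is matrix normal with respect to an orthonormal basis $\{e_k\}$, and let $\mathcal{D}_e=\mathrm{span}\{e_k\}$. Then: (1) for all $\phi\in\mathcal{D}_e$: $\langle\phi|\mathcal{L}(|\phi\rangle\langle\phi|)|\phi\rangle\le0$; (2) for all $\phi\in\mathcal{D}_e$ and all $\psi\in\mathcal{H}$ with $\langle\phi|\psi\rangle=0$: $\langle\psi|\mathcal{L}(|\phi\rangle\langle\phi|)|\psi\rangle\ge0$; (3) for all finite families $\phi_1,\dots,\phi_N\in\mathcal{D}_e$ and $\psi_1,\dots,\psi_N\in\mathcal{H}$ with $\sum_k\langle\phi_k|\psi_k\rangle=0$: $\sum_{k,\ell}\langle\psi_k|\mathcal{L}(|\phi_k\rangle\langle\phi_\ell|)|\psi_\ell\rangle\ge0$.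
   Context: $\mathcal{H}$ is a separable Hilbert space, $\mathfrak{T}(\mathcal{H})$ the Banach space of trace class operators with trace norm. A trace preserving quantum dynamical semigroup is a strongly continuous semigroup $(\mathcal{T}^t)_{t\ge0}$ of trace preserving completely positive maps on $\mathfrak{T}(\mathcal{H})$; its generator $\mathcal{L}$ is $\mathcal{L}(\rho)=\lim_{t\to0}\frac1t(\mathcal{T}^t(\rho)-\rho)$ in trace norm, on the domain where this limit exists. The semigroup is matrix normal with respect to the orthonormal basis $\{e_k\}$ if $\mathrm{span}\{|e_k\rangle\langle e_\ell|\}$ is a core for $\mathcal{L}$ (in particular it is contained in $\mathcal{D}(\mathcal{L})$). *)

theory Defs
  imports "HOL-Analysis.Analysis" "HOL-Library.Complex_Order"
begin

text \<open>
  A separable Hilbert space H with orthonormal basis (e_k) indexed by a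
  countable set is (unitarily) the space l2(K) of square summable functions K -> complex,
  with e_k the standard basis vector.  We take K to be a countable type 'k.
  Trace class operators on l2(K) are represented by their matrices
  rho i j = <e_i|rho e_j>, i.e. by functions 'k => 'k => complex.
\<close>

type_synonym 'k vec = "'k \<Rightarrow> complex"
type_synonym 'k mat = "'k \<Rightarrow> 'k \<Rightarrow> complex"

definition l2 :: "'k vec \<Rightarrow> bool" where
  "l2 x \<longleftrightarrow> (\<lambda>k. (cmod (x k))\<^sup>2) summable_on UNIV"

definition l2norm :: "'k vec \<Rightarrow> real" where
  "l2norm x = sqrt (\<Sum>\<^sub>\<infinity>k. (cmod (x k))\<^sup>2)"

definition inner_l2 :: "'k vec \<Rightarrow> 'k vec \<Rightarrow> complex" where
  "inner_l2 x y = (\<Sum>\<^sub>\<infinity>k. cnj (x k) * y k)"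

text \<open>Standard orthonormal basis vector e_k and the span D_e of the basis
  (finite complex linear combinations = finitely supported vectors).\<close>
definition basis_vec :: "'k \<Rightarrow> 'k vec" where
  "basis_vec k = (\<lambda>i. if i = k then 1 else 0)"

definition span_basis :: "'k vec set" where
  "span_basis = {x. finite {k. x k \<noteq> 0}}"

definition ket_bra :: "'k vec \<Rightarrow> 'k vec \<Rightarrow> 'k mat" where
  "ket_bra x y = (\<lambda>i j. x i * cnj (y j))"

text \<open>span of the matrix units |e_k><e_l| = finitely supported matrices.\<close>
definition span_matrix_units :: "'k mat set" where
  "span_matrix_units = {\<rho>. finite {(i, j). \<rho> i j \<noteq> 0}}"

text \<open>On a Hilbert space the trace class operators are exactly these, and the trace norm is
  the infimum of sum_n ||u_n|| ||v_n|| over all such representations.\<close>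
definition nuclear_rep :: "'k mat \<Rightarrow> (nat \<Rightarrow> 'k vec) \<Rightarrow> (nat \<Rightarrow> 'k vec) \<Rightarrow> bool" where
  "nuclear_rep \<rho> u v \<longleftrightarrow> (\<forall>n. l2 (u n) \<and> l2 (v n))
     \<and> summable (\<lambda>n. l2norm (u n) * l2norm (v n))
     \<and> (\<forall>i j. \<rho> i j = (\<Sum>n. u n i * cnj (v n j)))"

definition trace_class :: "'k mat set" where
  "trace_class = {\<rho>. \<exists>u v. nuclear_rep \<rho> u v}"

definition tnorm :: "'k mat \<Rightarrow> real" where
  "tnorm \<rho> = Inf {(\<Sum>n. l2norm (u n) * l2norm (v n)) | u v. nuclear_rep \<rho> u v}"

definition trace :: "'k mat \<Rightarrow> complex" where
  "trace \<rho> = (\<Sum>\<^sub>\<infinity>k. \<rho> k k)"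

definition sandwich :: "'k vec \<Rightarrow> 'k mat \<Rightarrow> 'k vec \<Rightarrow> complex" where
  "sandwich x \<rho> y = (\<Sum>\<^sub>\<infinity>(i, j). cnj (x i) * \<rho> i j * y j)"

definition mat_add :: "'k mat \<Rightarrow> 'k mat \<Rightarrow> 'k mat" where
  "mat_add a b = (\<lambda>i j. a i j + b i j)"

definition mat_diff :: "'k mat \<Rightarrow> 'k mat \<Rightarrow> 'k mat" where
  "mat_diff a b = (\<lambda>i j. a i j - b i j)"

definition mat_scale :: "complex \<Rightarrow> 'k mat \<Rightarrow> 'k mat" where
  "mat_scale c a = (\<lambda>i j. c * a i j)"

text \<open>Positivity of an n x n block matrix [rho_ab] of trace class operators,
  as an operator on H^n: sum_{a,b} <x_a|rho_ab|x_b> >= 0 for all x_1..x_n in H.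
  (The order on complex numbers: z >= 0 iff z is real and nonnegative.)\<close>
definition block_positive :: "nat \<Rightarrow> (nat \<Rightarrow> nat \<Rightarrow> 'k mat) \<Rightarrow> bool" where
  "block_positive n \<rho> \<longleftrightarrow> (\<forall>x :: nat \<Rightarrow> 'k vec. (\<forall>a<n. l2 (x a)) \<longrightarrow>
       (\<Sum>a<n. \<Sum>b<n. sandwich (x a) (\<rho> a b) (x b)) \<ge> 0)"

definition bounded_linear_tc :: "('k mat \<Rightarrow> 'k mat) \<Rightarrow> bool" where
  "bounded_linear_tc \<Phi> \<longleftrightarrow>
     (\<forall>\<rho>\<in>trace_class. \<Phi> \<rho> \<in> trace_class)
   \<and> (\<forall>\<rho>\<in>trace_class. \<forall>\<sigma>\<in>trace_class. \<forall>c.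
        \<Phi> (mat_add (mat_scale c \<rho>) \<sigma>) = mat_add (mat_scale c (\<Phi> \<rho>)) (\<Phi> \<sigma>))
   \<and> (\<exists>C. \<forall>\<rho>\<in>trace_class. tnorm (\<Phi> \<rho>) \<le> C * tnorm \<rho>)"

text \<open>Complete positivity: id_n (x) Phi is positive for every n.\<close>
definition completely_positive :: "('k mat \<Rightarrow> 'k mat) \<Rightarrow> bool" where
  "completely_positive \<Phi> \<longleftrightarrow> (\<forall>n. \<forall>\<rho> :: nat \<Rightarrow> nat \<Rightarrow> 'k mat.
      (\<forall>a<n. \<forall>b<n. \<rho> a b \<in> trace_class) \<and> block_positive n \<rho>
        \<longrightarrow> block_positive n (\<lambda>a b. \<Phi> (\<rho> a b)))"

definition trace_preserving :: "('k mat \<Rightarrow> 'k mat) \<Rightarrow> bool" where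
  "trace_preserving \<Phi> \<longleftrightarrow> (\<forall>\<rho>\<in>trace_class. trace (\<Phi> \<rho>) = trace \<rho>)"

definition tp_qds :: "(real \<Rightarrow> 'k mat \<Rightarrow> 'k mat) \<Rightarrow> bool" where
  "tp_qds T \<longleftrightarrow>
     (\<forall>t\<ge>0. bounded_linear_tc (T t) \<and> completely_positive (T t) \<and> trace_preserving (T t))
   \<and> (\<forall>\<rho>\<in>trace_class. T 0 \<rho> = \<rho>)
   \<and> (\<forall>s\<ge>0. \<forall>t\<ge>0. \<forall>\<rho>\<in>trace_class. T (s + t) \<rho> = T s (T t \<rho>))
   \<and> (\<forall>\<rho>\<in>trace_class. ((\<lambda>t. tnorm (mat_diff (T t \<rho>) \<rho>)) \<longlongrightarrow> 0) (at_right 0))"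

definition is_generator :: "(real \<Rightarrow> 'k mat \<Rightarrow> 'k mat) \<Rightarrow> 'k mat set \<Rightarrow> ('k mat \<Rightarrow> 'k mat) \<Rightarrow> bool" where
  "is_generator T D L \<longleftrightarrow>
     D = {\<rho>\<in>trace_class. \<exists>\<sigma>\<in>trace_class.
            ((\<lambda>t. tnorm (mat_diff (mat_scale (complex_of_real (1 / t)) (mat_diff (T t \<rho>) \<rho>)) \<sigma>))
               \<longlongrightarrow> 0) (at_right 0)}
   \<and> (\<forall>\<rho>\<in>D. L \<rho> \<in> trace_class \<and>
            ((\<lambda>t. tnorm (mat_diff (mat_scale (complex_of_real (1 / t)) (mat_diff (T t \<rho>) \<rho>)) (L \<rho>)))
               \<longlongrightarrow> 0) (at_right 0))"

definition is_core :: "'k mat set \<Rightarrow> 'k mat set \<Rightarrow> ('k mat \<Rightarrow> 'k mat) \<Rightarrow> bool" where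
  "is_core S D L \<longleftrightarrow> S \<subseteq> D \<and>
     (\<forall>\<rho> \<sigma>. (\<exists>r :: nat \<Rightarrow> 'k mat. (\<forall>n. r n \<in> S)
                 \<and> (\<lambda>n. tnorm (mat_diff (r n) \<rho>)) \<longlonglongrightarrow> 0
                 \<and> (\<lambda>n. tnorm (mat_diff (L (r n)) \<sigma>)) \<longlonglongrightarrow> 0)
              \<longleftrightarrow> (\<rho> \<in> D \<and> \<sigma> = L \<rho>))"

definition matrix_normal :: "(real \<Rightarrow> 'k mat \<Rightarrow> 'k mat) \<Rightarrow> 'k mat set \<Rightarrow> ('k mat \<Rightarrow> 'k mat) \<Rightarrow> bool" where
  "matrix_normal T D L \<longleftrightarrow> is_generator T D L \<and> is_core span_matrix_units D L"

end

theory Submission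
  imports Defs
begin

text \<open>
  Matrix elements are continuous in trace norm, \<open>|\<langle>x|\<sigma>|y\<rangle>| \<le> \<parallel>x\<parallel> \<parallel>y\<parallel> \<parallel>\<sigma>\<parallel>\<^sub>1\<close>, so for \<rho> in
  the domain \<open>\<langle>x|L \<rho>|y\<rangle>\<close> is the limit of \<open>(\<langle>x|T\<^sup>t \<rho>|y\<rangle> - \<langle>x|\<rho>|y\<rangle>) / t\<close> as \<open>t \<rightarrow> 0+\<close>, and it
  suffices to show that these numerators have the right sign.
  For (3), the block matrix \<open>[|\<phi>\<^sub>k\<rangle>\<langle>\<phi>\<^sub>l|]\<close> is positive, hence so is \<open>[T\<^sup>t (|\<phi>\<^sub>k\<rangle>\<langle>\<phi>\<^sub>l|)]\<close> by
  complete positivity, while \<open>\<Sum>\<^sub>k\<^sub>l \<langle>\<psi>\<^sub>k|\<phi>\<^sub>k\<rangle>\<langle>\<phi>\<^sub>l|\<psi>\<^sub>l\<rangle> = |\<Sum>\<^sub>k \<langle>\<phi>\<^sub>k|\<psi>\<^sub>k\<rangle>|\<^sup>2 = 0\<close>; (2) is the case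
  N = 1. For (1), \<open>T\<^sup>t (|\<phi>\<rangle>\<langle>\<phi>|)\<close> is a positive operator of trace \<open>\<parallel>\<phi>\<parallel>\<^sup>2\<close>, so its matrix
  element at \<phi> is at most \<open>\<parallel>\<phi>\<parallel>\<^sup>4\<close>, which is the matrix element of \<open>|\<phi>\<rangle>\<langle>\<phi>|\<close> itself.
\<close>

lemma l2norm_nonneg: "0 \<le> l2norm x"
  unfolding l2norm_def by (simp add: infsum_nonneg)

lemma norm_le_l2norm:
  assumes "l2 x" shows "cmod (x i) \<le> l2norm x"
proof -
  have "(\<Sum>k\<in>{i}. (cmod (x k))\<^sup>2) \<le> (\<Sum>\<^sub>\<infinity>k. (cmod (x k))\<^sup>2)"
    by (rule finite_sum_le_infsum) (use assms in \<open>auto simp: l2_def\<close>)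
  then have "sqrt ((cmod (x i))\<^sup>2) \<le> l2norm x"
    unfolding l2norm_def by (simp del: real_sqrt_abs)
  then show ?thesis by simp
qed

lemma l2_inner_abs_summable:
  assumes "l2 x" "l2 y"
  shows "(\<lambda>k. norm (cnj (x k) * y k)) summable_on UNIV"
proof -
  have "(\<lambda>k. norm (cmod (x k) * cmod (y k))) summable_on UNIV"
    by (rule Infinite_Sum.abs_summable_product) (use assms in \<open>simp_all add: l2_def power2_eq_square\<close>)
  then show ?thesis by (simp add: norm_mult)
qed

lemma l2_inner_abs_le:
  assumes "l2 x" "l2 y"
  shows "(\<Sum>\<^sub>\<infinity>k. norm (cnj (x k) * y k)) \<le> l2norm x * l2norm y"
proof (rule infsum_le_finite_sums[OF l2_inner_abs_summable[OF assms]])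
  fix F :: "'a set" assume F: "finite F"
  have L2_set_le: "L2_set (\<lambda>k. cmod (z k)) F \<le> l2norm z" if "l2 z" for z
    unfolding L2_set_def l2norm_def
    by (intro real_sqrt_le_mono finite_sum_le_infsum) (use F that in \<open>auto simp: l2_def\<close>)
  have "(\<Sum>k\<in>F. norm (cnj (x k) * y k)) = (\<Sum>k\<in>F. \<bar>cmod (x k)\<bar> * \<bar>cmod (y k)\<bar>)"
    by (simp add: norm_mult)
  also have "\<dots> \<le> L2_set (\<lambda>k. cmod (x k)) F * L2_set (\<lambda>k. cmod (y k)) F"
    by (rule L2_set_mult_ineq)
  also have "\<dots> \<le> l2norm x * l2norm y"
    by (intro mult_mono L2_set_le assms l2norm_nonneg L2_set_nonneg)
  finally show "(\<Sum>k\<in>F. norm (cnj (x k) * y k)) \<le> l2norm x * l2norm y" .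
qed

lemma l2_scale: "l2 x \<Longrightarrow> l2 (\<lambda>k. c * x k)"
  unfolding l2_def by (simp add: norm_mult power_mult_distrib summable_on_cmult_right)

lemma l2norm_scale: "l2norm (\<lambda>k. c * x k) = cmod c * l2norm x"
  unfolding l2norm_def
  by (simp add: norm_mult power_mult_distrib infsum_cmult_right' real_sqrt_mult)

lemma span_basis_l2: "x \<in> span_basis \<Longrightarrow> l2 x"
  unfolding l2_def span_basis_def
  by (rule finite_nonzero_values_imp_summable_on) (auto elim!: finite_subset[rotated])

lemma infsum_eq_sum_superset:
  assumes "finite A" "\<And>x. x \<notin> A \<Longrightarrow> f x = 0"
  shows "infsum f UNIV = sum f A"
proof -
  have "infsum f UNIV = infsum f A" by (rule infsum_cong_neutral) (use assms in auto)
  then show ?thesis using assms by simp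
qed

lemma inner_l2_eq_sum:
  assumes "finite A" "\<And>k. k \<notin> A \<Longrightarrow> x k = 0"
  shows "inner_l2 x y = (\<Sum>k\<in>A. cnj (x k) * y k)"
  unfolding inner_l2_def by (rule infsum_eq_sum_superset) (use assms in auto)

lemma sandwich_eq_sum:
  assumes "finite A" "\<And>k. k \<notin> A \<Longrightarrow> x k = 0" "\<And>k. k \<notin> A \<Longrightarrow> y k = 0"
  shows "sandwich x \<sigma> y = (\<Sum>i\<in>A. \<Sum>j\<in>A. cnj (x i) * \<sigma> i j * y j)"
proof -
  have "sandwich x \<sigma> y = (\<Sum>p\<in>A \<times> A. (\<lambda>(i, j). cnj (x i) * \<sigma> i j * y j) p)"
    unfolding sandwich_def
    by (rule infsum_eq_sum_superset) (use assms in \<open>force+\<close>)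
  then show ?thesis by (simp add: sum.cartesian_product)
qed

lemma infsum_product_abs_summable:
  fixes f :: "'a \<Rightarrow> 'c::{banach,real_normed_field}" and g :: "'b \<Rightarrow> 'c"
  assumes f: "(\<lambda>i. norm (f i)) summable_on UNIV" and g: "(\<lambda>j. norm (g j)) summable_on UNIV"
  shows "(\<lambda>p. norm (f (fst p) * g (snd p))) summable_on UNIV"
    and "(\<Sum>\<^sub>\<infinity>p. f (fst p) * g (snd p)) = (\<Sum>\<^sub>\<infinity>i. f i) * (\<Sum>\<^sub>\<infinity>j. g j)"
proof -
  have "(\<lambda>p. norm (f (fst p) * g (snd p))) summable_on Sigma UNIV (\<lambda>_. UNIV)"
  proof (rule Infinite_Sum.abs_summable_on_Sigma_iff[THEN iffD2], intro conjI ballI)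
    fix i show "(\<lambda>j. norm (f (fst (i, j)) * g (snd (i, j)))) summable_on UNIV"
      using summable_on_cmult_right[OF g, of "norm (f i)"] by (simp add: norm_mult)
  next
    have "(\<lambda>i. norm (f i) * (\<Sum>\<^sub>\<infinity>j. norm (g j))) summable_on UNIV"
      by (rule summable_on_cmult_left[OF f])
    then show "(\<lambda>i. norm (\<Sum>\<^sub>\<infinity>j. norm (f (fst (i, j)) * g (snd (i, j))))) summable_on UNIV"
      by (simp add: norm_mult infsum_cmult_right' abs_mult infsum_nonneg)
  qed
  then show abs: "(\<lambda>p. norm (f (fst p) * g (snd p))) summable_on UNIV" by simp
  have "(\<Sum>\<^sub>\<infinity>p. f (fst p) * g (snd p)) = (\<Sum>\<^sub>\<infinity>i. \<Sum>\<^sub>\<infinity>j. f i * g j)"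
    using infsum_Sigma_banach[of "\<lambda>p. f (fst p) * g (snd p)" UNIV "\<lambda>_. UNIV"]
      abs_summable_summable[OF abs] by simp
  also have "\<dots> = (\<Sum>\<^sub>\<infinity>i. f i) * (\<Sum>\<^sub>\<infinity>j. g j)"
    by (simp add: infsum_cmult_right' infsum_cmult_left')
  finally show "(\<Sum>\<^sub>\<infinity>p. f (fst p) * g (snd p)) = (\<Sum>\<^sub>\<infinity>i. f i) * (\<Sum>\<^sub>\<infinity>j. g j)" .
qed

lemma sums_interleave:
  fixes f g :: "nat \<Rightarrow> 'a::real_normed_vector"
  assumes "f sums x" "g sums y"
  shows "(\<lambda>n. if even n then f (n div 2) else g (n div 2)) sums (x + y)"
proof -
  have "(\<lambda>n. if even n then f (n div 2) else 0) sums x"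
    by (subst sums_mono_reindex[of "\<lambda>n. 2 * n", symmetric])
       (use assms(1) in \<open>auto simp: strict_mono_def\<close>)
  moreover have "(\<lambda>n. if even n then 0 else g (n div 2)) sums y"
  proof (subst sums_mono_reindex[of "\<lambda>n. 2 * n + 1", symmetric])
    show "n \<notin> range (\<lambda>n. 2 * n + 1) \<Longrightarrow> (if even n then 0 else g (n div 2)) = 0" for n
      by (metis (mono_tags) oddE rangeI)
  qed (use assms(2) in \<open>auto simp: strict_mono_def\<close>)
  ultimately show ?thesis
    by (rule sums_add[THEN sums_cong[THEN iffD1, rotated]]) simp
qed

lemma nuclear_rep_entry_abs_summable:
  assumes "nuclear_rep \<rho> u v" shows "summable (\<lambda>n. norm (u n i * cnj (v n j)))"
  by (rule summable_comparison_test[of _ "\<lambda>n. l2norm (u n) * l2norm (v n)"])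
     (use assms in \<open>auto simp: nuclear_rep_def norm_mult
                      intro!: exI[of _ 0] mult_mono norm_le_l2norm l2norm_nonneg\<close>)

lemma nuclear_rep_entry_sums:
  assumes "nuclear_rep \<rho> u v" shows "(\<lambda>n. u n i * cnj (v n j)) sums \<rho> i j"
  using summable_norm_cancel[OF nuclear_rep_entry_abs_summable[OF assms]] assms
  by (simp add: nuclear_rep_def summable_sums)

text \<open>Expanding \<open>\<rho> = \<Sum>\<^sub>n |u\<^sub>n\<rangle>\<langle>v\<^sub>n|\<close> turns \<open>\<langle>x|\<rho>|y\<rangle>\<close> into a sum over (n, i, j),
  which is absolutely summable by Cauchy-Schwarz in i and in j.\<close>

lemma nuclear_rep_sandwich_family:
  assumes nr: "nuclear_rep \<rho> u v" and x: "l2 x" and y: "l2 y"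
  defines "h \<equiv> \<lambda>(n, i, j). cnj (x i) * u n i * (cnj (v n j) * y j)"
  shows "(\<lambda>q. norm (h q)) summable_on UNIV"
    and "(\<Sum>\<^sub>\<infinity>q. norm (h q)) \<le> l2norm x * l2norm y * (\<Sum>n. l2norm (u n) * l2norm (v n))"
proof -
  define a where "a n i = cnj (x i) * u n i" for n i
  define b where "b n j = cnj (v n j) * y j" for n j
  define c where "c n = l2norm x * l2norm y * (l2norm (u n) * l2norm (v n))" for n
  have h_eq: "h = (\<lambda>(n, p). a n (fst p) * b n (snd p))"
    by (auto simp: h_def a_def b_def)
  have lu: "l2 (u n)" and lv: "l2 (v n)" for n
    using nr by (auto simp: nuclear_rep_def)
  have a: "(\<lambda>i. norm (a n i)) summable_on UNIV" "(\<Sum>\<^sub>\<infinity>i. norm (a n i)) \<le> l2norm x * l2norm (u n)" for n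
    unfolding a_def by (intro l2_inner_abs_summable l2_inner_abs_le x lu)+
  have b: "(\<lambda>j. norm (b n j)) summable_on UNIV" "(\<Sum>\<^sub>\<infinity>j. norm (b n j)) \<le> l2norm (v n) * l2norm y" for n
    unfolding b_def by (intro l2_inner_abs_summable l2_inner_abs_le y lv)+
  have slice: "(\<lambda>p. norm (a n (fst p) * b n (snd p))) summable_on UNIV" for n
    by (rule infsum_product_abs_summable(1)[OF a(1) b(1)])
  have slice_le: "(\<Sum>\<^sub>\<infinity>p. norm (a n (fst p) * b n (snd p))) \<le> c n" for n
  proof -
    have "(\<Sum>\<^sub>\<infinity>p. norm (a n (fst p) * b n (snd p)))
        = (\<Sum>\<^sub>\<infinity>i. norm (a n i)) * (\<Sum>\<^sub>\<infinity>j. norm (b n j))"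
      using infsum_product_abs_summable(2)[of "\<lambda>i. norm (a n i)" "\<lambda>j. norm (b n j)"] a(1) b(1)
      by (simp add: norm_mult)
    also have "\<dots> \<le> (l2norm x * l2norm (u n)) * (l2norm (v n) * l2norm y)"
      by (intro mult_mono a(2) b(2)) (auto intro: infsum_nonneg mult_nonneg_nonneg l2norm_nonneg)
    finally show ?thesis by (simp add: c_def algebra_simps)
  qed
  have c: "(c has_sum (l2norm x * l2norm y * (\<Sum>n. l2norm (u n) * l2norm (v n)))) UNIV"
    using nr unfolding c_def nuclear_rep_def
    by (intro sums_nonneg_imp_has_sum sums_mult summable_sums)
       (auto intro: mult_nonneg_nonneg l2norm_nonneg)
  have outer: "(\<lambda>n. \<Sum>\<^sub>\<infinity>p. norm (a n (fst p) * b n (snd p))) summable_on UNIV"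
    by (rule summable_on_comparison_test[OF has_sum_imp_summable[OF c] slice_le])
       (simp add: infsum_nonneg)
  have "(\<lambda>q. norm (h q)) summable_on Sigma UNIV (\<lambda>_. UNIV)"
    by (rule Infinite_Sum.abs_summable_on_Sigma_iff[THEN iffD2])
       (use slice outer in \<open>auto simp: h_eq infsum_nonneg\<close>)
  then show abs: "(\<lambda>q. norm (h q)) summable_on UNIV"
    by simp
  have "(\<Sum>\<^sub>\<infinity>q. norm (h q)) = (\<Sum>\<^sub>\<infinity>n. \<Sum>\<^sub>\<infinity>p. norm (a n (fst p) * b n (snd p)))"
    using infsum_Sigma_banach[of "\<lambda>q. norm (h q)" UNIV "\<lambda>_. UNIV"] abs
    by (simp add: h_eq)
  also have "\<dots> \<le> l2norm x * l2norm y * (\<Sum>n. l2norm (u n) * l2norm (v n))"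
    by (rule has_sum_mono[OF has_sum_infsum[OF outer] c slice_le])
  finally show "(\<Sum>\<^sub>\<infinity>q. norm (h q)) \<le> l2norm x * l2norm y * (\<Sum>n. l2norm (u n) * l2norm (v n))" .
qed

lemma nuclear_rep_sandwich:
  assumes nr: "nuclear_rep \<rho> u v" and x: "l2 x" and y: "l2 y"
  shows "(\<lambda>(i, j). cnj (x i) * \<rho> i j * y j) summable_on UNIV"
    and "cmod (sandwich x \<rho> y) \<le> l2norm x * l2norm y * (\<Sum>n. l2norm (u n) * l2norm (v n))"
proof -
  define h where "h = (\<lambda>(n, i, j). cnj (x i) * u n i * (cnj (v n j) * y j))"
  have abs: "(\<lambda>q. norm (h q)) summable_on UNIV"
    and abs_le: "(\<Sum>\<^sub>\<infinity>q. norm (h q)) \<le> l2norm x * l2norm y * (\<Sum>n. l2norm (u n) * l2norm (v n))"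
    using nuclear_rep_sandwich_family[OF nr x y] unfolding h_def by auto
  have h_sum: "h summable_on UNIV \<times> UNIV"
    using abs_summable_summable[OF abs] by simp
  have swapped: "(\<lambda>(p, n). h (n, p)) summable_on UNIV \<times> UNIV"
    using h_sum summable_on_swap by blast
  have entry: "((\<lambda>n. h (n, i, j)) has_sum cnj (x i) * \<rho> i j * y j) UNIV" for i j
  proof -
    have "((\<lambda>n. u n i * cnj (v n j)) has_sum \<rho> i j) UNIV"
      by (rule norm_summable_imp_has_sum[OF nuclear_rep_entry_abs_summable nuclear_rep_entry_sums])
         (use nr in auto)
    then have "((\<lambda>n. cnj (x i) * (u n i * cnj (v n j)) * y j) has_sum (cnj (x i) * \<rho> i j * y j)) UNIV"
      by (intro has_sum_cmult_left has_sum_cmult_right)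
    then show ?thesis by (simp add: h_def algebra_simps)
  qed
  have family_eq: "(\<lambda>(i, j). cnj (x i) * \<rho> i j * y j) = (\<lambda>p. \<Sum>\<^sub>\<infinity>n. h (n, p))"
    using entry by (auto intro!: infsumI[symmetric])
  show "(\<lambda>(i, j). cnj (x i) * \<rho> i j * y j) summable_on UNIV"
    unfolding family_eq using summable_on_Sigma_banach[of "\<lambda>p n. h (n, p)" UNIV "\<lambda>_. UNIV"] swapped
    by simp
  have "sandwich x \<rho> y = (\<Sum>\<^sub>\<infinity>p. \<Sum>\<^sub>\<infinity>n. h (n, p))"
    unfolding sandwich_def family_eq ..
  also have "\<dots> = (\<Sum>\<^sub>\<infinity>n. \<Sum>\<^sub>\<infinity>p. h (n, p))"
    by (rule infsum_swap_banach) (use swapped in simp)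
  also have "\<dots> = (\<Sum>\<^sub>\<infinity>q. h q)"
    using infsum_Sigma_banach[of h UNIV "\<lambda>_. UNIV"] h_sum by simp
  finally have "cmod (sandwich x \<rho> y) \<le> (\<Sum>\<^sub>\<infinity>q. norm (h q))"
    using norm_infsum_bound[OF abs] by simp
  with abs_le show "cmod (sandwich x \<rho> y) \<le> l2norm x * l2norm y * (\<Sum>n. l2norm (u n) * l2norm (v n))"
    by linarith
qed

lemma trace_class_sandwich_summable:
  "\<rho> \<in> trace_class \<Longrightarrow> l2 x \<Longrightarrow> l2 y \<Longrightarrow> (\<lambda>(i, j). cnj (x i) * \<rho> i j * y j) summable_on UNIV"
  unfolding trace_class_def using nuclear_rep_sandwich(1) by blast

lemma norm_sandwich_le_tnorm:
  assumes "\<rho> \<in> trace_class" "l2 x" "l2 y"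
  shows "cmod (sandwich x \<rho> y) \<le> l2norm x * l2norm y * tnorm \<rho>"
proof -
  define K where "K = l2norm x * l2norm y"
  let ?S = "{(\<Sum>n. l2norm (u n) * l2norm (v n)) | u v. nuclear_rep \<rho> u v}"
  have ne: "?S \<noteq> {}" using assms(1) unfolding trace_class_def by blast
  have bound: "cmod (sandwich x \<rho> y) \<le> K * s" if "s \<in> ?S" for s
    using that nuclear_rep_sandwich(2)[OF _ assms(2,3)] unfolding K_def by auto
  show ?thesis
  proof (cases "K = 0")
    case True
    then show ?thesis using bound ne unfolding K_def by fastforce
  next
    case False
    then have "K > 0" unfolding K_def by (simp add: l2norm_nonneg less_le)
    then have "cmod (sandwich x \<rho> y) / K \<le> Inf ?S"
      using bound by (intro cInf_greatest[OF ne]) (auto simp: field_simps mult.commute)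
    with \<open>K > 0\<close> show ?thesis
      unfolding tnorm_def K_def[symmetric] by (simp add: field_simps mult.commute)
  qed
qed

lemma trace_class_scale:
  assumes "\<rho> \<in> trace_class" shows "mat_scale c \<rho> \<in> trace_class"
proof -
  obtain u v where nr: "nuclear_rep \<rho> u v" using assms unfolding trace_class_def by auto
  have "nuclear_rep (mat_scale c \<rho>) (\<lambda>n i. c * u n i) v"
    using nr nuclear_rep_entry_sums[OF nr] unfolding nuclear_rep_def mat_scale_def
    by (auto simp: l2_scale l2norm_scale mult.assoc sums_iff suminf_mult intro!: summable_mult)
  then show ?thesis unfolding trace_class_def by auto
qed

text \<open>Interleaving two nuclear representations gives one of the sum.\<close>

lemma trace_class_add:
  assumes "\<rho> \<in> trace_class" "\<sigma> \<in> trace_class" shows "mat_add \<rho> \<sigma> \<in> trace_class"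
proof -
  obtain u v u' v' where nr: "nuclear_rep \<rho> u v" and nr': "nuclear_rep \<sigma> u' v'"
    using assms unfolding trace_class_def by auto
  define u'' where "u'' n = (if even n then u (n div 2) else u' (n div 2))" for n
  define v'' where "v'' n = (if even n then v (n div 2) else v' (n div 2))" for n
  have "nuclear_rep (mat_add \<rho> \<sigma>) u'' v''"
    unfolding nuclear_rep_def
  proof (intro conjI allI)
    show "l2 (u'' n)" "l2 (v'' n)" for n
      using nr nr' by (auto simp: u''_def v''_def nuclear_rep_def)
    have "(\<lambda>n. if even n then l2norm (u (n div 2)) * l2norm (v (n div 2))
                else l2norm (u' (n div 2)) * l2norm (v' (n div 2)))
            sums ((\<Sum>n. l2norm (u n) * l2norm (v n)) + (\<Sum>n. l2norm (u' n) * l2norm (v' n)))"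
      using nr nr' by (intro sums_interleave summable_sums) (auto simp: nuclear_rep_def)
    then show "summable (\<lambda>n. l2norm (u'' n) * l2norm (v'' n))"
      by (simp add: sums_summable u''_def v''_def if_distrib cong: if_cong)
    fix i j
    have "(\<lambda>n. if even n then u (n div 2) i * cnj (v (n div 2) j)
                else u' (n div 2) i * cnj (v' (n div 2) j)) sums (\<rho> i j + \<sigma> i j)"
      by (intro sums_interleave nuclear_rep_entry_sums nr nr')
    then show "mat_add \<rho> \<sigma> i j = (\<Sum>n. u'' n i * cnj (v'' n j))"
      by (simp add: mat_add_def u''_def v''_def sums_iff if_distrib if_distribR cong: if_cong)
  qed
  then show ?thesis unfolding trace_class_def by auto
qed

lemma mat_diff_eq_add_scale: "mat_diff a b = mat_add a (mat_scale (-1) b)"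
  unfolding mat_diff_def mat_add_def mat_scale_def by auto

lemma trace_class_diff:
  "\<rho> \<in> trace_class \<Longrightarrow> \<sigma> \<in> trace_class \<Longrightarrow> mat_diff \<rho> \<sigma> \<in> trace_class"
  unfolding mat_diff_eq_add_scale by (intro trace_class_add trace_class_scale)

lemma sandwich_scale: "sandwich x (mat_scale c \<rho>) y = c * sandwich x \<rho> y"
  unfolding sandwich_def mat_scale_def
  using infsum_cmult_right'[of c "\<lambda>(i, j). cnj (x i) * \<rho> i j * y j" UNIV]
  by (simp add: case_prod_unfold algebra_simps)

lemma sandwich_diff:
  assumes "\<rho> \<in> trace_class" "\<sigma> \<in> trace_class" "l2 x" "l2 y"
  shows "sandwich x (mat_diff \<rho> \<sigma>) y = sandwich x \<rho> y - sandwich x \<sigma> y"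
proof -
  have "sandwich x (mat_diff \<rho> \<sigma>) y = sandwich x \<rho> y + sandwich x (mat_scale (-1) \<sigma>) y"
    unfolding sandwich_def mat_diff_eq_add_scale mat_add_def
    using infsum_add[OF trace_class_sandwich_summable[OF assms(1,3,4)]
                        trace_class_sandwich_summable[OF trace_class_scale[OF assms(2)] assms(3,4)]]
    by (simp add: case_prod_unfold algebra_simps)
  then show ?thesis by (simp add: sandwich_scale)
qed

lemma sandwich_ket_bra:
  assumes "u \<in> span_basis" "v \<in> span_basis"
  shows "sandwich x (ket_bra u v) y = cnj (inner_l2 u x) * inner_l2 v y"
proof -
  define A where "A = {k. u k \<noteq> 0}"
  define B where "B = {k. v k \<noteq> 0}"
  have fin: "finite A" "finite B" using assms unfolding A_def B_def span_basis_def by auto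
  have "sandwich x (ket_bra u v) y = (\<Sum>p\<in>A \<times> B. (\<lambda>(i, j). cnj (x i) * ket_bra u v i j * y j) p)"
    unfolding sandwich_def
    by (rule infsum_eq_sum_superset) (use fin in \<open>auto simp: A_def B_def ket_bra_def\<close>)
  also have "\<dots> = (\<Sum>i\<in>A. cnj (x i) * u i) * (\<Sum>j\<in>B. cnj (v j) * y j)"
    by (simp add: sum.cartesian_product[symmetric] sum_product ket_bra_def algebra_simps)
  also have "\<dots> = cnj (inner_l2 u x) * inner_l2 v y"
    using inner_l2_eq_sum[OF fin(1), of u x] inner_l2_eq_sum[OF fin(2), of v y]
    by (simp add: A_def B_def mult.commute)
  finally show ?thesis .
qed

lemma ket_bra_trace_class:
  assumes "l2 u" "l2 v"
  shows "ket_bra u v \<in> trace_class"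
proof -
  define u' where "u' n = (if n = 0 then u else (\<lambda>_. 0))" for n :: nat
  define v' where "v' n = (if n = 0 then v else (\<lambda>_. 0))" for n :: nat
  have "nuclear_rep (ket_bra u v) u' v'"
    unfolding nuclear_rep_def
  proof (intro conjI allI)
    show "l2 (u' n)" "l2 (v' n)" for n
      using assms by (auto simp: u'_def v'_def l2_def)
    show "summable (\<lambda>n. l2norm (u' n) * l2norm (v' n))"
      by (rule summable_finite[of "{0}"]) (auto simp: u'_def v'_def l2norm_def)
    fix i j
    have "(\<lambda>n. u' n i * cnj (v' n j)) = (\<lambda>n. if n = 0 then u i * cnj (v j) else 0)"
      by (auto simp: u'_def v'_def)
    then show "ket_bra u v i j = (\<Sum>n. u' n i * cnj (v' n j))"
      using sums_single[of 0 "\<lambda>_. u i * cnj (v j)"] by (simp add: ket_bra_def sums_iff)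
  qed
  then show ?thesis unfolding trace_class_def by auto
qed

lemma ket_bra_span_matrix_units:
  assumes "u \<in> span_basis" "v \<in> span_basis"
  shows "ket_bra u v \<in> span_matrix_units"
proof -
  have "{(i, j). ket_bra u v i j \<noteq> 0} \<subseteq> {k. u k \<noteq> 0} \<times> {k. v k \<noteq> 0}"
    by (auto simp: ket_bra_def)
  then show ?thesis
    using assms unfolding span_matrix_units_def span_basis_def by (auto intro: finite_subset)
qed

lemma cnj_mult_self_nonneg: "0 \<le> cnj z * (z::complex)"
  by (simp add: complex_mult_cnj mult.commute less_eq_complex_def)

lemma inner_l2_self_nonneg:
  assumes "x \<in> span_basis" shows "0 \<le> inner_l2 x x"
proof -
  have "finite {k. x k \<noteq> 0}" using assms by (simp add: span_basis_def)
  then have "inner_l2 x x = (\<Sum>k\<in>{k. x k \<noteq> 0}. cnj (x k) * x k)"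
    by (rule inner_l2_eq_sum) simp
  then show ?thesis by (simp only:) (intro sum_nonneg cnj_mult_self_nonneg)
qed

lemma block_positive_ket_bra:
  fixes \<phi> :: "nat \<Rightarrow> 'k vec"
  assumes "\<forall>a<n. \<phi> a \<in> span_basis"
  shows "block_positive n (\<lambda>a b. ket_bra (\<phi> a) (\<phi> b))"
  unfolding block_positive_def
proof (intro allI impI)
  fix x :: "nat \<Rightarrow> 'k vec"
  have "(\<Sum>a<n. \<Sum>b<n. sandwich (x a) (ket_bra (\<phi> a) (\<phi> b)) (x b))
      = (\<Sum>a<n. \<Sum>b<n. cnj (inner_l2 (\<phi> a) (x a)) * inner_l2 (\<phi> b) (x b))"
    using assms by (auto intro!: sum.cong simp: sandwich_ket_bra)
  also have "\<dots> = cnj (\<Sum>a<n. inner_l2 (\<phi> a) (x a)) * (\<Sum>b<n. inner_l2 (\<phi> b) (x b))"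
    by (simp add: sum_product)
  also have "\<dots> \<ge> 0" by (rule cnj_mult_self_nonneg)
  finally show "(\<Sum>a<n. \<Sum>b<n. sandwich (x a) (ket_bra (\<phi> a) (\<phi> b)) (x b)) \<ge> 0" .
qed

definition positive_mat :: "'k mat \<Rightarrow> bool" where
  "positive_mat \<sigma> \<longleftrightarrow> (\<forall>z. l2 z \<longrightarrow> 0 \<le> sandwich z \<sigma> z)"

lemma block_positive_one_iff:
  fixes \<sigma> :: "'k mat"
  shows "block_positive 1 (\<lambda>_ _. \<sigma>) \<longleftrightarrow> positive_mat \<sigma>"
proof
  assume block: "block_positive 1 (\<lambda>_ _. \<sigma>)"
  show "positive_mat \<sigma>"
    unfolding positive_mat_def
  proof (intro allI impI)
    fix z :: "'k vec" assume "l2 z"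
    with block show "0 \<le> sandwich z \<sigma> z"
      unfolding block_positive_def by (auto dest: spec[of _ "\<lambda>_. z"])
  qed
next
  assume "positive_mat \<sigma>"
  then show "block_positive 1 (\<lambda>_ _. \<sigma>)"
    unfolding block_positive_def positive_mat_def by simp
qed

lemma positive_mat_ket_bra_self:
  assumes "\<phi> \<in> span_basis" shows "positive_mat (ket_bra \<phi> \<phi>)"
proof -
  have "block_positive 1 (\<lambda>_ _. ket_bra \<phi> \<phi>)"
    using block_positive_ket_bra[of 1 "\<lambda>_. \<phi>"] assms by simp
  then show ?thesis by (simp only: block_positive_one_iff)
qed

lemma completely_positive_positive_mat:
  assumes "completely_positive \<Phi>" "\<sigma> \<in> trace_class" "positive_mat \<sigma>"
  shows "positive_mat (\<Phi> \<sigma>)"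
proof -
  have "block_positive 1 (\<lambda>_ _. \<sigma>)"
    using assms(3) by (simp only: block_positive_one_iff)
  then have "block_positive 1 (\<lambda>_ _. \<Phi> \<sigma>)"
    using assms(2) by (intro assms(1)[unfolded completely_positive_def, rule_format]) simp
  then show ?thesis by (simp only: block_positive_one_iff)
qed

lemma positive_mat_diag_nonneg:
  assumes "positive_mat \<sigma>" shows "0 \<le> \<sigma> k k"
proof -
  have "sandwich (basis_vec k) \<sigma> (basis_vec k) = \<sigma> k k"
    by (subst sandwich_eq_sum[of "{k}"]) (auto simp: basis_vec_def)
  moreover have "basis_vec k \<in> span_basis"
    unfolding span_basis_def basis_vec_def by simp
  ultimately show ?thesis
    using assms span_basis_l2 unfolding positive_mat_def by metis
qed

lemma sum_sum_if_pair:
  assumes "finite A" "i \<in> A" "k \<in> A"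
  shows "(\<Sum>a\<in>A. \<Sum>b\<in>A. if a = i \<and> b = k then f a b else 0) = (f i k :: complex)"
proof -
  have "(\<Sum>a\<in>A. \<Sum>b\<in>A. if a = i \<and> b = k then f a b else 0) = (\<Sum>a\<in>A. if a = i then f a k else 0)"
    using assms by (intro sum.cong refl) (auto simp: sum.delta')
  also have "\<dots> = f i k" using assms by (simp add: sum.delta')
  finally show ?thesis .
qed

lemma quadratic_form_two_point:
  fixes \<phi> :: "'k vec" and \<sigma> :: "'k mat"
  assumes "finite A" "i \<in> A" "j \<in> A"
  defines "w \<equiv> \<lambda>a. (if a = i then cnj (\<phi> j) else 0) - (if a = j then cnj (\<phi> i) else 0)"
  shows "(\<Sum>a\<in>A. \<Sum>b\<in>A. cnj (w a) * \<sigma> a b * w b) =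
     \<phi> j * cnj (\<phi> j) * \<sigma> i i - \<phi> j * cnj (\<phi> i) * \<sigma> i j
     - \<phi> i * cnj (\<phi> j) * \<sigma> j i + \<phi> i * cnj (\<phi> i) * \<sigma> j j"
proof -
  have "cnj (w a) * \<sigma> a b * w b =
     (if a = i \<and> b = i then \<phi> j * cnj (\<phi> j) * \<sigma> a b else 0)
   - (if a = i \<and> b = j then \<phi> j * cnj (\<phi> i) * \<sigma> a b else 0)
   - (if a = j \<and> b = i then \<phi> i * cnj (\<phi> j) * \<sigma> a b else 0)
   + (if a = j \<and> b = j then \<phi> i * cnj (\<phi> i) * \<sigma> a b else 0)" for a b
    unfolding w_def by (auto simp: algebra_simps)
  then show ?thesis
    using assms(1-3) by (simp add: sum.distrib sum_subtractf sum_sum_if_pair)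
qed

text \<open>With \<open>w\<^sub>i\<^sub>j = cnj (\<phi> j) e\<^sub>i - cnj (\<phi> i) e\<^sub>j\<close>, summing \<open>0 \<le> \<langle>w\<^sub>i\<^sub>j|\<sigma>|w\<^sub>i\<^sub>j\<rangle>\<close> over
  i, j \<in> A gives \<open>0 \<le> 2 (\<parallel>\<phi>\<parallel>\<^sup>2 \<Sum>\<^sub>i\<^sub>\<in>\<^sub>A \<sigma> i i - \<langle>\<phi>|\<sigma>|\<phi>\<rangle>)\<close>.\<close>

lemma sandwich_le_inner_mult_diag_sum:
  assumes pos: "positive_mat \<sigma>" and A: "finite A" and \<phi>: "\<And>k. k \<notin> A \<Longrightarrow> \<phi> k = 0"
  shows "sandwich \<phi> \<sigma> \<phi> \<le> inner_l2 \<phi> \<phi> * (\<Sum>i\<in>A. \<sigma> i i)"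
proof -
  define w where "w i j = (\<lambda>a. (if a = i then cnj (\<phi> j) else 0) - (if a = j then cnj (\<phi> i) else 0))"
    for i j
  have sw: "sandwich \<phi> \<sigma> \<phi> = (\<Sum>i\<in>A. \<Sum>j\<in>A. cnj (\<phi> i) * \<sigma> i j * \<phi> j)"
    by (rule sandwich_eq_sum[OF A \<phi> \<phi>])
  have n: "inner_l2 \<phi> \<phi> = (\<Sum>i\<in>A. cnj (\<phi> i) * \<phi> i)"
    by (rule inner_l2_eq_sum[OF A \<phi>])
  have w_pos: "0 \<le> (\<Sum>a\<in>A. \<Sum>b\<in>A. cnj (w i j a) * \<sigma> a b * w i j b)" if "i \<in> A" "j \<in> A" for i j
  proof -
    have w0: "k \<notin> A \<Longrightarrow> w i j k = 0" for k using that by (auto simp: w_def)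
    have "w i j \<in> span_basis"
      unfolding span_basis_def using A w0 by (auto intro: finite_subset)
    then have "0 \<le> sandwich (w i j) \<sigma> (w i j)"
      using pos span_basis_l2 unfolding positive_mat_def by blast
    then show ?thesis by (simp add: sandwich_eq_sum[OF A w0 w0])
  qed
  have "0 \<le> (\<Sum>i\<in>A. \<Sum>j\<in>A. \<Sum>a\<in>A. \<Sum>b\<in>A. cnj (w i j a) * \<sigma> a b * w i j b)"
    by (intro sum_nonneg w_pos)
  also have "\<dots> = (\<Sum>i\<in>A. \<Sum>j\<in>A. \<phi> j * cnj (\<phi> j) * \<sigma> i i - \<phi> j * cnj (\<phi> i) * \<sigma> i j
        - \<phi> i * cnj (\<phi> j) * \<sigma> j i + \<phi> i * cnj (\<phi> i) * \<sigma> j j)"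
    unfolding w_def using A by (intro sum.cong refl quadratic_form_two_point) auto
  also have "\<dots> = 2 * (inner_l2 \<phi> \<phi> * (\<Sum>i\<in>A. \<sigma> i i)) - 2 * sandwich \<phi> \<sigma> \<phi>"
  proof -
    have diag: "(\<Sum>i\<in>A. \<Sum>j\<in>A. \<phi> j * cnj (\<phi> j) * \<sigma> i i) = inner_l2 \<phi> \<phi> * (\<Sum>i\<in>A. \<sigma> i i)"
      unfolding n by (simp add: sum_product algebra_simps)
    have diag': "(\<Sum>i\<in>A. \<Sum>j\<in>A. \<phi> i * cnj (\<phi> i) * \<sigma> j j) = inner_l2 \<phi> \<phi> * (\<Sum>i\<in>A. \<sigma> i i)"
      unfolding diag[symmetric] by (subst sum.swap) simp
    have off: "(\<Sum>i\<in>A. \<Sum>j\<in>A. \<phi> j * cnj (\<phi> i) * \<sigma> i j) = sandwich \<phi> \<sigma> \<phi>"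
      unfolding sw by (simp add: algebra_simps)
    have off': "(\<Sum>i\<in>A. \<Sum>j\<in>A. \<phi> i * cnj (\<phi> j) * \<sigma> j i) = sandwich \<phi> \<sigma> \<phi>"
      unfolding sw by (subst sum.swap) (simp add: algebra_simps)
    show ?thesis by (simp add: sum.distrib sum_subtractf diag diag' off off')
  qed
  finally show ?thesis by (simp add: less_eq_complex_def)
qed

lemma sandwich_le_of_trace_eq_inner:
  assumes pos: "positive_mat \<sigma>" and \<phi>: "\<phi> \<in> span_basis" and tr: "trace \<sigma> = inner_l2 \<phi> \<phi>"
  shows "sandwich \<phi> \<sigma> \<phi> \<le> inner_l2 \<phi> \<phi> * inner_l2 \<phi> \<phi>"
proof -
  define A where "A = {k. \<phi> k \<noteq> 0}"
  have A: "finite A" using \<phi> unfolding A_def span_basis_def by simp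
  have le: "sandwich \<phi> \<sigma> \<phi> \<le> inner_l2 \<phi> \<phi> * (\<Sum>i\<in>A. \<sigma> i i)"
    by (rule sandwich_le_inner_mult_diag_sum[OF pos A]) (simp add: A_def)
  have n_nonneg: "0 \<le> inner_l2 \<phi> \<phi>"
    by (rule inner_l2_self_nonneg[OF \<phi>])
  show ?thesis
  proof (cases "inner_l2 \<phi> \<phi> = 0")
    case True
    then show ?thesis using le by simp
  next
    case False
    \<comment> \<open>Only now is the diagonal known to be summable: otherwise \<open>trace \<sigma>\<close> would be the junk value \<open>0\<close>.\<close>
    then have "(\<lambda>k. \<sigma> k k) summable_on UNIV"
      using tr infsum_not_exists unfolding trace_def by metis
    then have "(\<Sum>i\<in>A. \<sigma> i i) \<le> trace \<sigma>"
      unfolding trace_def using A positive_mat_diag_nonneg[OF pos]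
      by (subst infsum_finite[OF A, symmetric]) (rule infsum_mono_neutral_complex, auto)
    then show ?thesis
      using le tr mult_left_mono[OF _ n_nonneg] by (metis order_trans)
  qed
qed

lemma tendsto_complex_nonneg:
  fixes f :: "'a \<Rightarrow> complex"
  assumes "(f \<longlongrightarrow> l) F" "eventually (\<lambda>t. 0 \<le> f t) F" "F \<noteq> bot"
  shows "0 \<le> l"
proof -
  have ev: "eventually (\<lambda>t. 0 \<le> Re (f t) \<and> Im (f t) = 0) F"
    using assms(2) by eventually_elim (simp add: less_eq_complex_def)
  have Re: "((\<lambda>t. Re (f t)) \<longlongrightarrow> Re l) F" and Im: "((\<lambda>t. Im (f t)) \<longlongrightarrow> Im l) F"
    using assms(1) by (auto intro: tendsto_Re tendsto_Im)
  have "0 \<le> Re l"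
    by (rule tendsto_lowerbound[OF Re _ assms(3)]) (use ev in \<open>auto elim: eventually_mono\<close>)
  moreover have "0 \<le> Im l"
    by (rule tendsto_lowerbound[OF Im _ assms(3)]) (use ev in \<open>auto elim: eventually_mono\<close>)
  moreover have "Im l \<le> 0"
    by (rule tendsto_upperbound[OF Im _ assms(3)]) (use ev in \<open>auto elim: eventually_mono\<close>)
  ultimately show ?thesis by (simp add: less_eq_complex_def)
qed

lemma of_real_inverse_nonneg: "0 < t \<Longrightarrow> 0 \<le> complex_of_real (1/t)"
  by (simp add: less_eq_complex_def)

lemma tp_qds_trace_class:
  "tp_qds T \<Longrightarrow> 0 \<le> t \<Longrightarrow> \<rho> \<in> trace_class \<Longrightarrow> T t \<rho> \<in> trace_class"
  unfolding tp_qds_def bounded_linear_tc_def by auto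

lemma sandwich_difference_quotient_tendsto:
  assumes qds: "tp_qds T" and gen: "is_generator T D L" and "\<rho> \<in> D" and x: "l2 x" and y: "l2 y"
  shows "((\<lambda>t. complex_of_real (1/t) * (sandwich x (T t \<rho>) y - sandwich x \<rho> y))
           \<longlongrightarrow> sandwich x (L \<rho>) y) (at_right 0)"
proof -
  define Q where "Q t = mat_scale (complex_of_real (1/t)) (mat_diff (T t \<rho>) \<rho>)" for t
  have \<rho>: "\<rho> \<in> trace_class" and L\<rho>: "L \<rho> \<in> trace_class"
    and lim: "((\<lambda>t. tnorm (mat_diff (Q t) (L \<rho>))) \<longlongrightarrow> 0) (at_right 0)"
    using gen \<open>\<rho> \<in> D\<close> unfolding is_generator_def Q_def by auto
  have Q: "Q t \<in> trace_class" if "0 < t" for t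
    unfolding Q_def using that
    by (intro trace_class_scale trace_class_diff tp_qds_trace_class[OF qds] \<rho>) simp
  have Q_eq: "sandwich x (Q t) y = complex_of_real (1/t) * (sandwich x (T t \<rho>) y - sandwich x \<rho> y)"
    if "0 < t" for t
    unfolding Q_def sandwich_scale using that
    by (simp add: sandwich_diff tp_qds_trace_class[OF qds] \<rho> x y)
  have "((\<lambda>t. sandwich x (Q t) y - sandwich x (L \<rho>) y) \<longlongrightarrow> 0) (at_right 0)"
  proof (rule Lim_null_comparison)
    show "eventually (\<lambda>t. norm (sandwich x (Q t) y - sandwich x (L \<rho>) y)
            \<le> l2norm x * l2norm y * tnorm (mat_diff (Q t) (L \<rho>))) (at_right 0)"
      using eventually_at_right_less[of 0]
      by eventually_elim
         (metis norm_sandwich_le_tnorm sandwich_diff trace_class_diff Q L\<rho> x y)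
    show "((\<lambda>t. l2norm x * l2norm y * tnorm (mat_diff (Q t) (L \<rho>))) \<longlongrightarrow> 0) (at_right 0)"
      using tendsto_mult_left[OF lim] by simp
  qed
  then have "((\<lambda>t. sandwich x (Q t) y) \<longlongrightarrow> sandwich x (L \<rho>) y) (at_right 0)"
    by (rule LIM_zero_cancel)
  then show ?thesis
    by (rule tendsto_cong[THEN iffD1, rotated])
       (use eventually_at_right_less[of 0] in \<open>auto elim: eventually_mono simp: Q_eq\<close>)
qed

lemma sum_sandwich_generator_ket_bra_nonneg:
  fixes N :: nat and \<phi> \<psi> :: "nat \<Rightarrow> 'k vec"
  assumes qds: "tp_qds T" and gen: "is_generator T D L" and units: "span_matrix_units \<subseteq> D"
    and \<phi>: "\<forall>k<N. \<phi> k \<in> span_basis" and \<psi>: "\<forall>k<N. l2 (\<psi> k)"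
    and orth: "(\<Sum>k<N. inner_l2 (\<phi> k) (\<psi> k)) = 0"
  shows "0 \<le> (\<Sum>k<N. \<Sum>l<N. sandwich (\<psi> k) (L (ket_bra (\<phi> k) (\<phi> l))) (\<psi> l))"
proof -
  define \<rho> where "\<rho> k l = ket_bra (\<phi> k) (\<phi> l)" for k l
  define S where "S f = (\<Sum>k<N. \<Sum>l<N. sandwich (\<psi> k) (f (\<rho> k l)) (\<psi> l))" for f
  have \<rho>: "\<rho> k l \<in> trace_class" "\<rho> k l \<in> D" if "k < N" "l < N" for k l
    using \<phi> that units unfolding \<rho>_def
    by (auto intro: ket_bra_trace_class span_basis_l2 ket_bra_span_matrix_units)
  have quotient: "complex_of_real (1/t) * (S (T t) - S id) = (\<Sum>k<N. \<Sum>l<N.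
      complex_of_real (1/t) * (sandwich (\<psi> k) (T t (\<rho> k l)) (\<psi> l) - sandwich (\<psi> k) (\<rho> k l) (\<psi> l)))"
    for t by (simp add: S_def right_diff_distrib sum_subtractf sum_distrib_left)
  have "((\<lambda>t. complex_of_real (1/t) * (S (T t) - S id)) \<longlongrightarrow> S L) (at_right 0)"
    unfolding quotient unfolding S_def
    by (intro tendsto_sum sandwich_difference_quotient_tendsto[OF qds gen]) (use \<rho> \<psi> in auto)
  moreover have "eventually (\<lambda>t. 0 \<le> complex_of_real (1/t) * (S (T t) - S id)) (at_right 0)"
    using eventually_at_right_less[of 0]
  proof eventually_elim
    case (elim t)
    have "S id = cnj (\<Sum>k<N. inner_l2 (\<phi> k) (\<psi> k)) * (\<Sum>l<N. inner_l2 (\<phi> l) (\<psi> l))"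
      unfolding S_def \<rho>_def using \<phi> by (simp add: sandwich_ket_bra sum_product)
    then have "S id = 0" by (simp add: orth)
    have cp: "completely_positive (T t)" using qds elim unfolding tp_qds_def by auto
    have "block_positive N \<rho>"
      unfolding \<rho>_def by (rule block_positive_ket_bra[OF \<phi>])
    then have "block_positive N (\<lambda>k l. T t (\<rho> k l))"
      using \<rho>(1) by (intro cp[unfolded completely_positive_def, rule_format]) auto
    then have "0 \<le> S (T t)"
      unfolding block_positive_def S_def using \<psi> by auto
    with \<open>S id = 0\<close> show ?case
      using mult_nonneg_nonneg[OF of_real_inverse_nonneg[OF elim]] by simp
  qed
  ultimately show ?thesis
    unfolding S_def \<rho>_def by (rule tendsto_complex_nonneg) simp
qed

lemma sandwich_generator_ket_bra_self_nonpos: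
  assumes qds: "tp_qds T" and gen: "is_generator T D L" and units: "span_matrix_units \<subseteq> D"
    and \<phi>: "\<phi> \<in> span_basis"
  shows "sandwich \<phi> (L (ket_bra \<phi> \<phi>)) \<phi> \<le> 0"
proof -
  define P where "P = ket_bra \<phi> \<phi>"
  define n where "n = inner_l2 \<phi> \<phi>"
  define A where "A = {k. \<phi> k \<noteq> 0}"
  have A: "finite A" using \<phi> unfolding A_def span_basis_def by simp
  have P: "P \<in> trace_class" "P \<in> D"
    using \<phi> units unfolding P_def
    by (auto intro: ket_bra_trace_class span_basis_l2 ket_bra_span_matrix_units)
  have "cnj n = n"
    using inner_l2_self_nonneg[OF \<phi>] unfolding n_def
    by (metis Reals_cnj_iff nonnegative_complex_is_real)
  then have sP: "sandwich \<phi> P \<phi> = n * n"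
    unfolding P_def n_def by (simp add: sandwich_ket_bra[OF \<phi> \<phi>])
  have n_sum: "n = (\<Sum>k\<in>A. cnj (\<phi> k) * \<phi> k)"
    unfolding n_def by (rule inner_l2_eq_sum[OF A]) (simp add: A_def)
  have "trace P = (\<Sum>k\<in>A. P k k)"
    unfolding trace_def by (rule infsum_eq_sum_superset[OF A]) (simp add: A_def P_def ket_bra_def)
  then have trP: "trace P = n"
    by (simp add: n_sum P_def ket_bra_def mult.commute)
  have "((\<lambda>t. complex_of_real (1/t) * (sandwich \<phi> (T t P) \<phi> - sandwich \<phi> P \<phi>))
          \<longlongrightarrow> sandwich \<phi> (L P) \<phi>) (at_right 0)"
    by (intro sandwich_difference_quotient_tendsto[OF qds gen P(2)] span_basis_l2 \<phi>)
  from tendsto_minus[OF this]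
  have "((\<lambda>t. complex_of_real (1/t) * (n * n - sandwich \<phi> (T t P) \<phi>))
          \<longlongrightarrow> - sandwich \<phi> (L P) \<phi>) (at_right 0)"
    unfolding sP by (simp add: right_diff_distrib)
  moreover have "eventually (\<lambda>t. 0 \<le> complex_of_real (1/t) * (n * n - sandwich \<phi> (T t P) \<phi>))
      (at_right 0)"
    using eventually_at_right_less[of 0]
  proof eventually_elim
    case (elim t)
    have cp: "completely_positive (T t)" using qds elim unfolding tp_qds_def by auto
    have "trace (T t P) = n"
      using qds elim P(1) trP unfolding tp_qds_def trace_preserving_def by auto
    moreover have "positive_mat (T t P)"
      using completely_positive_positive_mat[OF cp P(1)] positive_mat_ket_bra_self[OF \<phi>]
      unfolding P_def by blast
    ultimately have "sandwich \<phi> (T t P) \<phi> \<le> n * n"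
      unfolding n_def by (intro sandwich_le_of_trace_eq_inner \<phi>)
    then show ?case
      by (intro mult_nonneg_nonneg of_real_inverse_nonneg elim) (simp only: diff_ge_0_iff_ge)
  qed
  ultimately have "0 \<le> - sandwich \<phi> (L P) \<phi>"
    by (rule tendsto_complex_nonneg) simp
  then show ?thesis unfolding P_def by (simp only: neg_0_le_iff_le)
qed

theorem lemma3p1:
  fixes T :: "real \<Rightarrow> ('k::countable) mat \<Rightarrow> 'k mat"
    and D :: "'k mat set" and L :: "'k mat \<Rightarrow> 'k mat"
  assumes "tp_qds T"
    and "is_generator T D L"
    and "matrix_normal T D L"
  shows "(\<forall>\<phi>\<in>span_basis. sandwich \<phi> (L (ket_bra \<phi> \<phi>)) \<phi> \<le> 0)
       \<and> (\<forall>\<phi>\<in>span_basis. \<forall>\<psi>. l2 \<psi> \<and> inner_l2 \<phi> \<psi> = 0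
            \<longrightarrow> sandwich \<psi> (L (ket_bra \<phi> \<phi>)) \<psi> \<ge> 0)
       \<and> (\<forall>(N::nat) (\<phi>::nat \<Rightarrow> 'k vec) (\<psi>::nat \<Rightarrow> 'k vec).
            (\<forall>k<N. \<phi> k \<in> span_basis \<and> l2 (\<psi> k))
            \<and> (\<Sum>k<N. inner_l2 (\<phi> k) (\<psi> k)) = 0
            \<longrightarrow> (\<Sum>k<N. \<Sum>l<N. sandwich (\<psi> k) (L (ket_bra (\<phi> k) (\<phi> l))) (\<psi> l)) \<ge> 0)"
proof -
  have units: "span_matrix_units \<subseteq> D"
    using assms(3) unfolding matrix_normal_def is_core_def by blast
  note nonpos = sandwich_generator_ket_bra_self_nonpos[OF assms(1,2) units]
  note part3 = sum_sandwich_generator_ket_bra_nonneg[OF assms(1,2) units]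
  show ?thesis
  proof (intro conjI ballI allI impI)
    show "sandwich \<phi> (L (ket_bra \<phi> \<phi>)) \<phi> \<le> 0" if "\<phi> \<in> span_basis" for \<phi>
      by (rule nonpos[OF that])
    show "sandwich \<psi> (L (ket_bra \<phi> \<phi>)) \<psi> \<ge> 0"
      if "\<phi> \<in> span_basis" and "l2 \<psi> \<and> inner_l2 \<phi> \<psi> = 0" for \<phi> \<psi>
      using part3[where N = 1 and \<phi> = "\<lambda>_. \<phi>" and \<psi> = "\<lambda>_. \<psi>"] that by simp
    show "(\<Sum>k<N. \<Sum>l<N. sandwich (\<psi> k) (L (ket_bra (\<phi> k) (\<phi> l))) (\<psi> l)) \<ge> 0"
      if "(\<forall>k<N. \<phi> k \<in> span_basis \<and> l2 (\<psi> k)) \<and> (\<Sum>k<N. inner_l2 (\<phi> k) (\<psi> k)) = 0"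
      for N :: nat and \<phi> \<psi> :: "nat \<Rightarrow> 'k vec"
      using part3 that by blast
  qed
qed

end
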